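(* Let $W$ be an arbitrary quantum walk on $\ell^2(\mathbb{Z})\otimes\mathbb{C}^2$ and $k\in\mathbb{N}$. Then $v(W^k)=k\,v(W)$.
   Context: $\ell^2(\mathbb{Z})\otimes\mathbb{C}^2$ has basis $\delta_j^\pm=\delta_j\otimes e_\pm$. State-dependent shifts: $S_\pm=T^{\pm1}\otimes P_\pm+\mathbb{1}\otimes P_\mp$, where $T\delta_j=\delta_{j+1}$ and $P_\pm$ are the projections onto $e_+=(1,0)^\top$, $e_-=(0,1)^\top$. A coin operator acts as $C(\delta_j\otimes v)=\delta_j\otimes C(j)v$ with $C(j)$ unitary $2\times2$ matrices. A quantum walk is a finite product of shift operators $S_\pm$ and coin operators. $Q\delta_j^\pm=j\delta_j^\pm$ is the position operator. For a walk $W$ and normalized $\psi\in\mathrm{dom}(Q)$, $v(W,\psi)=\limsup_{t\to\infty,\,t\in\mathbb{N}}\frac1t\|QW^t\psi\|$, and $v(W)=\sup\{v(W,\psi):\psi\in\mathrm{dom}(Q),\|\psi\|=1\}$. *)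

theory Defs
  imports "HOL-Analysis.Analysis"
begin

text \<open>Vectors of l2(Z) tensor C^2 are functions on Z x {+,-}; the second
  component True stands for e_+ and False for e_-.\<close>
type_synonym qvec = "int \<times> bool \<Rightarrow> complex"

definition l2 :: "qvec set" where
  "l2 = {\<psi>. (\<lambda>x. (cmod (\<psi> x))\<^sup>2) summable_on UNIV}"

definition l2norm :: "qvec \<Rightarrow> real" where
  "l2norm \<psi> = sqrt (\<Sum>\<^sub>\<infinity>x. (cmod (\<psi> x))\<^sup>2)"

definition posop :: "qvec \<Rightarrow> qvec" where
  "posop \<psi> = (\<lambda>(j, s). of_int j * \<psi> (j, s))"

definition domQ :: "qvec set" where
  "domQ = {\<psi>. \<psi> \<in> l2 \<and> posop \<psi> \<in> l2}"

text \<open>S_+ = T (x) P_+ + 1 (x) P_-,  S_- = T^{-1} (x) P_- + 1 (x) P_+, with T delta_j = delta_{j+1}.\<close>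
definition Splus :: "qvec \<Rightarrow> qvec" where
  "Splus \<psi> = (\<lambda>(j, s). if s then \<psi> (j - 1, True) else \<psi> (j, False))"

definition Sminus :: "qvec \<Rightarrow> qvec" where
  "Sminus \<psi> = (\<lambda>(j, s). if s then \<psi> (j, True) else \<psi> (j + 1, False))"

text \<open>A 2x2 matrix is a function bool => bool => complex (row, column).\<close>
definition unitary2 :: "(bool \<Rightarrow> bool \<Rightarrow> complex) \<Rightarrow> bool" where
  "unitary2 M \<longleftrightarrow>
     (\<forall>a b. (\<Sum>k\<in>UNIV. cnj (M k a) * M k b) = (if a = b then 1 else 0)) \<and>
     (\<forall>a b. (\<Sum>k\<in>UNIV. M a k * cnj (M b k)) = (if a = b then 1 else 0))"

definition coin_op :: "(int \<Rightarrow> bool \<Rightarrow> bool \<Rightarrow> complex) \<Rightarrow> qvec \<Rightarrow> qvec" where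
  "coin_op C \<psi> = (\<lambda>(j, s). \<Sum>s'\<in>UNIV. C j s s' * \<psi> (j, s'))"

inductive qwalk :: "(qvec \<Rightarrow> qvec) \<Rightarrow> bool" where
  shift_plus: "qwalk Splus"
| shift_minus: "qwalk Sminus"
| coin: "(\<And>j. unitary2 (C j)) \<Longrightarrow> qwalk (coin_op C)"
| prod: "qwalk A \<Longrightarrow> qwalk B \<Longrightarrow> qwalk (A \<circ> B)"

definition velocity_at :: "(qvec \<Rightarrow> qvec) \<Rightarrow> qvec \<Rightarrow> ereal" where
  "velocity_at W \<psi> = limsup (\<lambda>t::nat. ereal (l2norm (posop ((W ^^ t) \<psi>)) / real t))"

definition velocity :: "(qvec \<Rightarrow> qvec) \<Rightarrow> ereal" where
  "velocity W = (SUP \<psi>\<in>{\<psi>. \<psi> \<in> domQ \<and> l2norm \<psi> = 1}. velocity_at W \<psi>)"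

end

theory Submission
  imports Defs
begin

text \<open>Every quantum walk \<open>W\<close> maps the domain of \<open>Q\<close> isometrically into itself, and since a
  shift moves the particle by at most one site while a coin acts on each site separately,
  \<open>\<parallel>Q W \<phi>\<parallel> \<le> \<parallel>Q \<phi>\<parallel> + c \<parallel>\<phi>\<parallel>\<close> for some constant \<open>c\<close>. Hence \<open>a\<^sub>t = \<parallel>Q W\<^sup>t \<psi>\<parallel>\<close> has uniformly bounded
  increments, so \<open>a\<^sub>t / t\<close> and its subsequence \<open>a\<^sub>k\<^sub>t / (k t)\<close> have the same limsup. Since
  \<open>(W\<^sup>k)\<^sup>t = W\<^sup>k\<^sup>t\<close>, this gives \<open>v(W\<^sup>k, \<psi>) = k v(W, \<psi>)\<close> for every \<open>\<psi>\<close>.\<close>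

lemma l2norm_nonneg: "0 \<le> l2norm f"
  unfolding l2norm_def by (simp add: infsum_nonneg)

lemma L2_set_le_l2norm:
  assumes "f \<in> l2" "finite F"
  shows "L2_set (\<lambda>x. cmod (f x)) F \<le> l2norm f"
proof -
  have "(\<Sum>x\<in>F. (cmod (f x))\<^sup>2) \<le> (\<Sum>\<^sub>\<infinity>x. (cmod (f x))\<^sup>2)"
    using assms by (intro finite_sum_le_infsum) (auto simp: l2_def)
  then show ?thesis unfolding L2_set_def l2norm_def by simp
qed

lemma l2_triangle_pointwise:
  assumes "f \<in> l2" "g \<in> l2" "\<And>x. cmod (h x) \<le> cmod (f x) + cmod (g x)"
  shows "h \<in> l2" "l2norm h \<le> l2norm f + l2norm g"
proof -
  define B where "B = l2norm f + l2norm g"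
  have "0 \<le> B" unfolding B_def by (simp add: l2norm_nonneg)
  have finite_sums: "(\<Sum>x\<in>F. (cmod (h x))\<^sup>2) \<le> B\<^sup>2" if "finite F" for F
  proof -
    have "L2_set (\<lambda>x. cmod (h x)) F \<le> L2_set (\<lambda>x. cmod (f x) + cmod (g x)) F"
      by (rule L2_set_mono) (use assms(3) in auto)
    also have "\<dots> \<le> L2_set (\<lambda>x. cmod (f x)) F + L2_set (\<lambda>x. cmod (g x)) F"
      by (rule L2_set_triangle_ineq)
    also have "\<dots> \<le> B"
      unfolding B_def using L2_set_le_l2norm assms(1,2) that by (meson add_mono)
    finally have "(L2_set (\<lambda>x. cmod (h x)) F)\<^sup>2 \<le> B\<^sup>2"
      by (intro power_mono) (auto simp: L2_set_def sum_nonneg)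
    then show ?thesis unfolding L2_set_def by (simp add: sum_nonneg)
  qed
  have summable: "(\<lambda>x. (cmod (h x))\<^sup>2) summable_on UNIV"
    by (rule nonneg_bdd_above_summable_on) (use finite_sums in \<open>auto simp: bdd_above_def\<close>)
  then show "h \<in> l2" by (simp add: l2_def)
  have "(\<Sum>\<^sub>\<infinity>x. (cmod (h x))\<^sup>2) \<le> B\<^sup>2"
    by (rule infsum_le_finite_sums[OF summable]) (use finite_sums in auto)
  then have "l2norm h \<le> sqrt (B\<^sup>2)" unfolding l2norm_def by (rule real_sqrt_le_mono)
  with \<open>0 \<le> B\<close> show "l2norm h \<le> l2norm f + l2norm g" by (simp add: B_def)
qed

lemma l2_comp_bij:
  assumes "bij \<sigma>" "f \<in> l2"
  shows "f \<circ> \<sigma> \<in> l2" "l2norm (f \<circ> \<sigma>) = l2norm f"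
  using assms summable_on_reindex_bij_betw[of \<sigma> UNIV UNIV "\<lambda>x. (cmod (f x))\<^sup>2"]
    infsum_reindex_bij_betw[of \<sigma> UNIV UNIV "\<lambda>x. (cmod (f x))\<^sup>2"]
  by (simp_all add: l2_def l2norm_def)

lemma infsum_eq_fibrewise:
  fixes f g :: "'a \<times> 'b::finite \<Rightarrow> real"
  assumes "\<And>x. 0 \<le> g x" "f summable_on UNIV"
    and fibres: "\<And>j. (\<Sum>s\<in>UNIV. g (j, s)) = (\<Sum>s\<in>UNIV. f (j, s))"
  shows "g summable_on UNIV" "infsum g UNIV = infsum f UNIV"
proof -
  have "(\<lambda>j. \<Sum>\<^sub>\<infinity>s. f (j, s)) summable_on UNIV"
    using summable_on_Sigma_banach[of "\<lambda>j s. f (j, s)" UNIV "\<lambda>_. UNIV"] assms(2) by simp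
  then have fibre_sums: "(\<lambda>j. \<Sum>s\<in>UNIV. g (j, s)) summable_on UNIV"
    by (simp add: fibres)
  show g: "g summable_on UNIV"
    using summable_on_SigmaI[where A = UNIV and B = "\<lambda>_. UNIV" and f = g, OF _ fibre_sums] assms(1)
    by (simp add: has_sum_finite)
  show "infsum g UNIV = infsum f UNIV"
    using infsum_Sigma_banach[of g UNIV "\<lambda>_. UNIV"] infsum_Sigma_banach[of f UNIV "\<lambda>_. UNIV"]
      g assms(2) by (simp add: fibres)
qed

lemma unitary2_preserves_norm:
  assumes "unitary2 M"
  shows "(\<Sum>s\<in>UNIV. (cmod (\<Sum>s'\<in>UNIV. M s s' * v s'))\<^sup>2) = (\<Sum>s\<in>UNIV. (cmod (v s))\<^sup>2)"
proof -
  have cols: "(\<Sum>k\<in>UNIV. cnj (M k a) * M k b) = (if a = b then 1 else 0)" for a b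
    using assms by (simp add: unitary2_def)
  have "complex_of_real (\<Sum>s\<in>UNIV. (cmod (\<Sum>s'\<in>UNIV. M s s' * v s'))\<^sup>2)
      = complex_of_real (\<Sum>s\<in>UNIV. (cmod (v s))\<^sup>2)"
    using cols[of True True] cols[of True False] cols[of False True] cols[of False False]
    by (simp add: UNIV_bool complex_norm_square del: of_real_power) algebra
  then show ?thesis by (simp only: of_real_eq_iff)
qed

text \<open>The estimate \<open>\<parallel>Q W \<phi>\<parallel> \<le> \<parallel>W Q \<phi>\<parallel> + \<parallel>[Q, W] \<phi>\<parallel>\<close> for a unitary \<open>W\<close> with bounded
  commutator \<open>[Q, W]\<close>, with \<open>c\<close> playing the role of \<open>\<parallel>[Q, W]\<parallel>\<close>.\<close>
definition bounded_drift :: "(qvec \<Rightarrow> qvec) \<Rightarrow> real \<Rightarrow> bool" where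
  "bounded_drift W c \<longleftrightarrow> (\<forall>\<phi>\<in>domQ. W \<phi> \<in> domQ \<and> l2norm (W \<phi>) = l2norm \<phi> \<and>
     l2norm (posop (W \<phi>)) \<le> l2norm (posop \<phi>) + c * l2norm \<phi>)"

lemma bounded_drift_id: "bounded_drift id 0"
  by (simp add: bounded_drift_def)

lemma bounded_drift_comp:
  assumes "bounded_drift A a" "bounded_drift B b"
  shows "bounded_drift (A \<circ> B) (a + b)"
  unfolding bounded_drift_def
proof (intro ballI conjI)
  fix \<phi> assume "\<phi> \<in> domQ"
  with assms(2) have B: "B \<phi> \<in> domQ" "l2norm (B \<phi>) = l2norm \<phi>"
    "l2norm (posop (B \<phi>)) \<le> l2norm (posop \<phi>) + b * l2norm \<phi>"
    by (auto simp: bounded_drift_def)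
  with assms(1) have A: "A (B \<phi>) \<in> domQ" "l2norm (A (B \<phi>)) = l2norm \<phi>"
    "l2norm (posop (A (B \<phi>))) \<le> l2norm (posop (B \<phi>)) + a * l2norm \<phi>"
    by (auto simp: bounded_drift_def)
  from A B show "(A \<circ> B) \<phi> \<in> domQ" "l2norm ((A \<circ> B) \<phi>) = l2norm \<phi>"
    "l2norm (posop ((A \<circ> B) \<phi>)) \<le> l2norm (posop \<phi>) + (a + b) * l2norm \<phi>"
    by (simp_all add: distrib_right)
qed

lemma bounded_drift_funpow:
  assumes "bounded_drift W c"
  shows "bounded_drift (W ^^ n) (real n * c)"
proof (induction n)
  case 0
  show ?case using bounded_drift_id by (simp add: id_def)
next
  case (Suc n)
  from bounded_drift_comp[OF assms Suc.IH] show ?case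
    by (simp add: algebra_simps comp_def)
qed

lemma bounded_drift_coin_op:
  assumes "\<And>j. unitary2 (C j)"
  shows "bounded_drift (coin_op C) 0"
proof -
  have coin_l2: "coin_op C \<phi> \<in> l2 \<and> l2norm (coin_op C \<phi>) = l2norm \<phi>" if "\<phi> \<in> l2" for \<phi>
  proof -
    have "(\<lambda>x. (cmod (coin_op C \<phi> x))\<^sup>2) summable_on UNIV \<and>
        (\<Sum>\<^sub>\<infinity>x. (cmod (coin_op C \<phi> x))\<^sup>2) = (\<Sum>\<^sub>\<infinity>x. (cmod (\<phi> x))\<^sup>2)"
      using infsum_eq_fibrewise[of "\<lambda>x. (cmod (coin_op C \<phi> x))\<^sup>2" "\<lambda>x. (cmod (\<phi> x))\<^sup>2"]
        that unitary2_preserves_norm[OF assms] by (simp add: l2_def coin_op_def)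
    then show ?thesis by (simp add: l2_def l2norm_def)
  qed
  have "posop (coin_op C \<phi>) = coin_op C (posop \<phi>)" for \<phi>
    by (auto simp: posop_def coin_op_def sum_distrib_left algebra_simps fun_eq_iff)
  with coin_l2 show ?thesis
    by (simp add: bounded_drift_def domQ_def)
qed

lemma bounded_drift_reindex:
  assumes "bij \<sigma>" "\<And>x. \<bar>fst x\<bar> \<le> \<bar>fst (\<sigma> x)\<bar> + 1"
  shows "bounded_drift (\<lambda>\<phi>. \<phi> \<circ> \<sigma>) 1"
  unfolding bounded_drift_def
proof (intro ballI conjI)
  fix \<phi> assume "\<phi> \<in> domQ"
  then have \<phi>: "\<phi> \<in> l2" "posop \<phi> \<in> l2" by (auto simp: domQ_def)
  have "cmod (posop (\<phi> \<circ> \<sigma>) x) \<le> cmod ((posop \<phi> \<circ> \<sigma>) x) + cmod ((\<phi> \<circ> \<sigma>) x)" for x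
  proof -
    have "\<bar>real_of_int (fst x)\<bar> \<le> \<bar>real_of_int (fst (\<sigma> x))\<bar> + 1"
      using assms(2)[of x] by (simp flip: of_int_abs)
    then have "\<bar>of_int (fst x)\<bar> * cmod (\<phi> (\<sigma> x)) \<le> (\<bar>of_int (fst (\<sigma> x))\<bar> + 1) * cmod (\<phi> (\<sigma> x))"
      by (simp add: mult_right_mono)
    then show ?thesis
      by (simp add: posop_def norm_mult case_prod_beta algebra_simps)
  qed
  note triangle = l2_triangle_pointwise[OF l2_comp_bij(1)[OF assms(1) \<phi>(2)] l2_comp_bij(1)[OF assms(1) \<phi>(1)] this]
  show "\<phi> \<circ> \<sigma> \<in> domQ" using triangle(1) l2_comp_bij(1)[OF assms(1) \<phi>(1)] by (simp add: domQ_def)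
  show "l2norm (\<phi> \<circ> \<sigma>) = l2norm \<phi>" using l2_comp_bij(2)[OF assms(1) \<phi>(1)] .
  show "l2norm (posop (\<phi> \<circ> \<sigma>)) \<le> l2norm (posop \<phi>) + 1 * l2norm \<phi>"
    using triangle(2) l2_comp_bij(2)[OF assms(1) \<phi>(1)] l2_comp_bij(2)[OF assms(1) \<phi>(2)]
    by linarith
qed

lemma bounded_drift_Splus: "bounded_drift Splus 1"
proof -
  let ?\<sigma> = "\<lambda>(j, s). if s then (j - 1, True) else (j :: int, False)"
  have "bij ?\<sigma>"
    by (rule bij_betw_byWitness[where f' = "\<lambda>(j, s). if s then (j + 1, True) else (j, False)"]) auto
  then have "bounded_drift (\<lambda>\<phi>. \<phi> \<circ> ?\<sigma>) 1"
    by (rule bounded_drift_reindex) auto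
  moreover have "Splus = (\<lambda>\<phi>. \<phi> \<circ> ?\<sigma>)"
    by (auto simp: Splus_def fun_eq_iff)
  ultimately show ?thesis by simp
qed

lemma bounded_drift_Sminus: "bounded_drift Sminus 1"
proof -
  let ?\<sigma> = "\<lambda>(j, s). if s then (j, True) else (j + 1 :: int, False)"
  have "bij ?\<sigma>"
    by (rule bij_betw_byWitness[where f' = "\<lambda>(j, s). if s then (j, True) else (j - 1, False)"]) auto
  then have "bounded_drift (\<lambda>\<phi>. \<phi> \<circ> ?\<sigma>) 1"
    by (rule bounded_drift_reindex) auto
  moreover have "Sminus = (\<lambda>\<phi>. \<phi> \<circ> ?\<sigma>)"
    by (auto simp: Sminus_def fun_eq_iff)
  ultimately show ?thesis by simp
qed

lemma qwalk_bounded_drift: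
  assumes "qwalk W"
  shows "\<exists>c\<ge>0. bounded_drift W c"
  using assms
proof induction
  case shift_plus
  show ?case using bounded_drift_Splus by (intro exI[of _ 1]) simp
next
  case shift_minus
  show ?case using bounded_drift_Sminus by (intro exI[of _ 1]) simp
next
  case (coin C)
  show ?case using bounded_drift_coin_op[OF coin] by (intro exI[of _ 0]) simp
next
  case (prod A B)
  then obtain a b where "0 \<le> a" "bounded_drift A a" "0 \<le> b" "bounded_drift B b"
    by auto
  then show ?case by (metis add_nonneg_nonneg bounded_drift_comp)
qed

lemma limsup_const_over_n: "limsup (\<lambda>n. ereal (x / real n)) = 0"
proof -
  have "(\<lambda>n. ereal (x / real n)) \<longlonglongrightarrow> ereal 0"
    by (intro tendsto_ereal lim_const_over_n)
  then show ?thesis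
    unfolding zero_ereal_def by (rule lim_imp_Limsup[OF sequentially_bot])
qed

lemma limsup_compose_le:
  fixes v :: "nat \<Rightarrow> 'a::complete_linorder"
  assumes "filterlim r sequentially sequentially"
  shows "limsup (\<lambda>n. v (r n)) \<le> limsup v"
proof -
  have "limsup (\<lambda>n. v (r n)) \<le> Limsup (filtermap r sequentially) v"
    by (rule Limsup_filtermap_ge)
  also have "\<dots> \<le> limsup v"
    using assms unfolding Limsup_def filterlim_def le_filter_def
    by (intro INF_superset_mono) auto
  finally show ?thesis .
qed

lemma limsup_rate_along_multiples:
  fixes a :: "nat \<Rightarrow> real"
  assumes nonneg: "\<And>n. 0 \<le> a n" and increments: "\<And>m r. a (m + r) \<le> a m + real r * D"
    and "0 \<le> D" "0 < k"
  shows "limsup (\<lambda>m. ereal (a (k * m) / real (k * m))) = limsup (\<lambda>n. ereal (a n / real n))"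
proof -
  define u where "u n = ereal (a n / real n)" for n
  have "limsup (\<lambda>m. u (k * m)) \<le> limsup u"
    using limsup_subseq_mono[of "\<lambda>m. k * m" u] \<open>0 < k\<close> by (simp add: strict_mono_def comp_def)
  moreover have "limsup u \<le> limsup (\<lambda>m. u (k * m))"
  proof -
    have close: "u n \<le> u (k * (n div k)) + ereal (real k * D / real n)" if "k \<le> n" for n
    proof -
      define m where "m = n div k"
      have "0 < m" using that \<open>0 < k\<close> by (simp add: m_def div_greater_zero_iff)
      then have km: "0 < real (k * m)" "real (k * m) \<le> real n"
        using \<open>0 < k\<close> by (simp_all add: m_def of_nat_le_iff[symmetric, of "k * _"] del: of_nat_mult)
      have "a n = a (k * m + n mod k)" by (simp add: m_def)
      also have "\<dots> \<le> a (k * m) + real (n mod k) * D" by (rule increments)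
      also have "\<dots> \<le> a (k * m) + real k * D"
        using \<open>0 \<le> D\<close> \<open>0 < k\<close> by (simp add: mult_right_mono less_imp_le)
      finally have "a n / real n \<le> a (k * m) / real n + real k * D / real n"
        using km by (simp add: divide_right_mono flip: add_divide_distrib)
      also have "a (k * m) / real n \<le> a (k * m) / real (k * m)"
        using km nonneg by (intro divide_left_mono) auto
      finally show ?thesis by (simp add: u_def m_def)
    qed
    have "limsup u \<le> limsup (\<lambda>n. u (k * (n div k)) + ereal (real k * D / real n))"
      using close by (intro Limsup_mono) (auto simp: eventually_sequentially)
    also have "\<dots> \<le> limsup (\<lambda>n. u (k * (n div k))) + limsup (\<lambda>n. ereal (real k * D / real n))"
      by (rule ereal_limsup_add_mono)
    also have "\<dots> \<le> limsup (\<lambda>m. u (k * m))"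
      using limsup_compose_le[OF filterlim_at_top_div_const_nat[OF \<open>0 < k\<close>], of "\<lambda>m. u (k * m)"]
      by (simp add: limsup_const_over_n)
    finally show ?thesis .
  qed
  ultimately show ?thesis unfolding u_def by (rule antisym)
qed

lemma velocity_at_funpow:
  assumes "bounded_drift W c" "0 \<le> c" "\<psi> \<in> domQ"
  shows "velocity_at (W ^^ k) \<psi> = ereal (real k) * velocity_at W \<psi>"
proof (cases "k = 0")
  case True
  then show ?thesis by (simp add: velocity_at_def limsup_const_over_n)
next
  case False
  define a where "a n = l2norm (posop ((W ^^ n) \<psi>))" for n
  have "a (m + r) \<le> a m + real r * (c * l2norm \<psi>)" for m r
  proof -
    have "(W ^^ m) \<psi> \<in> domQ" "l2norm ((W ^^ m) \<psi>) = l2norm \<psi>"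
      using bounded_drift_funpow[OF assms(1), of m] assms(3) by (auto simp: bounded_drift_def)
    moreover have "(W ^^ (m + r)) \<psi> = (W ^^ r) ((W ^^ m) \<psi>)"
      by (metis add.commute comp_apply funpow_add)
    ultimately show ?thesis
      using bounded_drift_funpow[OF assms(1), of r] by (auto simp: bounded_drift_def a_def)
  qed
  then have multiples: "limsup (\<lambda>m. ereal (a (k * m) / real (k * m))) = limsup (\<lambda>n. ereal (a n / real n))"
    using False assms(2)
    by (intro limsup_rate_along_multiples[where D = "c * l2norm \<psi>"]) (auto simp: a_def l2norm_nonneg)
  have "velocity_at (W ^^ k) \<psi> = limsup (\<lambda>m. ereal (real k) * ereal (a (k * m) / real (k * m)))"
    unfolding velocity_at_def funpow_mult a_def using False
    by (intro arg_cong[where f = limsup] ext) auto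
  also have "\<dots> = ereal (real k) * limsup (\<lambda>m. ereal (a (k * m) / real (k * m)))"
    by (rule limsup_ereal_mult_left) simp
  finally show ?thesis
    unfolding multiples by (simp add: velocity_at_def a_def)
qed

lemma exists_normalized_in_domQ: "\<exists>\<psi>. \<psi> \<in> domQ \<and> l2norm \<psi> = 1"
proof -
  define \<delta> :: qvec where "\<delta> x = (if x = (0, True) then 1 else 0)" for x
  have "((\<lambda>x. (cmod (\<delta> x))\<^sup>2) has_sum 1) UNIV"
    using has_sum_finite[of "{(0, True)}" "\<lambda>x. (cmod (\<delta> x))\<^sup>2"]
    by (subst has_sum_cong_neutral[where T = "{(0, True)}"]) (auto simp: \<delta>_def)
  moreover have "posop \<delta> = (\<lambda>_. 0)"
    by (auto simp: posop_def \<delta>_def fun_eq_iff)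
  ultimately have "\<delta> \<in> domQ \<and> l2norm \<delta> = 1"
    by (auto simp: domQ_def l2_def l2norm_def has_sum_imp_summable infsumI)
  then show ?thesis by blast
qed

theorem lemma3p6:
  fixes W :: "qvec \<Rightarrow> qvec" and k :: nat
  assumes "qwalk W"
  shows "velocity (W ^^ k) = ereal (real k) * velocity W"
proof -
  obtain c where "0 \<le> c" "bounded_drift W c"
    using qwalk_bounded_drift[OF assms] by blast
  define Y where "Y = {\<psi>. \<psi> \<in> domQ \<and> l2norm \<psi> = 1}"
  have "velocity (W ^^ k) = (SUP \<psi>\<in>Y. ereal (real k) * velocity_at W \<psi>)"
    unfolding velocity_def Y_def[symmetric]
    using velocity_at_funpow[OF \<open>bounded_drift W c\<close> \<open>0 \<le> c\<close>] by (auto simp: Y_def)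
  also have "\<dots> = ereal (real k) * velocity W"
    unfolding velocity_def Y_def[symmetric]
    using exists_normalized_in_domQ by (intro Sup_ereal_mult_left'[symmetric]) (auto simp: Y_def)
  finally show ?thesis .
qed

end
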